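(* For every positive integer $r$ there exist an integer $K_r\le 3^r$, elements $a_1,\dots,a_{K_r}\in\mathbf{D}_3$, and a map $\pi:\{1,\dots,K_r\}\to\{1,\dots,r\}$ such that for every $y\in\{0,1\}^r$, $$a_1^{y_{\pi(1)}}a_2^{y_{\pi(2)}}\cdots a_{K_r}^{y_{\pi(K_r)}}\neq 1\iff y_1=y_2=\dots=y_r=1.$$ Equivalently, the linear equation $C(x_1,\dots,x_{K_r})=a_1^{x_1}\cdots a_{K_r}^{x_{K_r}}$ over $\mathbf{D}_3$ satisfies $\mathbf 1[C(y_{\pi(1)},\dots,y_{\pi(K_r)})\ne1]=\mathbf{AND}_r(y_1,\dots,y_r)$.
   Context: $\mathbf{D}_3$ denotes the dihedral group of order 6; $1$ denotes its identity and $a^0=1$, $a^1=a$. A linear equation over a group $G$ on variables $x_1,\dots,x_K\in\{0,1\}$ is a map of the form $C(x)=a_1^{x_1}\cdots a_K^{x_K}$ with $a_i\in G$, the product taken in the given order. $\mathbf{AND}_r(y)=1$ iff all $y_i=1$, and $0$ otherwise. *)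

theory Defs
  imports "HOL-Algebra.Group"
begin

text \<open>The dihedral group D3 of order 6, realised concretely: the element (k, s)
  with k in {0,1,2} and s a boolean stands for rho^k sigma^s (rho a rotation of order 3,
  sigma a reflection, sigma rho sigma = rho^-1).  Hence
  (k1,s1)(k2,s2) = (k1 + (-1)^s1 k2 mod 3, s1 xor s2).\<close>

definition D3 :: "(int \<times> bool) monoid" where
  "D3 = \<lparr> carrier = {0,1,2} \<times> UNIV,
          mult = (\<lambda>(k1, s1) (k2, s2). ((k1 + (if s1 then - k2 else k2)) mod 3, s1 \<noteq> s2)),
          one = (0, False) \<rparr>"

definition list_prod :: "('a, 'b) monoid_scheme \<Rightarrow> 'a list \<Rightarrow> 'a" where
  "list_prod G xs = foldr (\<lambda>x acc. x \<otimes>\<^bsub>G\<^esub> acc) xs \<one>\<^bsub>G\<^esub>"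

end

theory Submission
  imports Defs
begin

text \<open>Let g be an element of order 3 and s an involution with s g s = g^-1.  Start from
  the one-letter equation g^(y_0) and, for each further variable y, replace the current
  equation w by w w s^y w s^y.  As long as w evaluates to 1 or g, the new equation evaluates to
  w w w^-1 = w if y = 1 and to w^3 = 1 if y = 0.  So after r - 1 steps the equation evaluates
  to g if all variables are 1 and to 1 otherwise, and its length L satisfies L + 1 = 2 * 3^(r-1).
  In D3, take a rotation for g and a reflection for s.\<close>

context monoid
begin

lemma list_prod_Nil [simp]: "list_prod G [] = \<one>"
  by (simp add: list_prod_def)

lemma list_prod_Cons [simp]: "list_prod G (x # xs) = x \<otimes> list_prod G xs"
  by (simp add: list_prod_def)

lemma list_prod_closed [intro, simp]: "set xs \<subseteq> carrier G \<Longrightarrow> list_prod G xs \<in> carrier G"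
  by (induction xs) auto

lemma list_prod_append:
  "set xs \<subseteq> carrier G \<Longrightarrow> set ys \<subseteq> carrier G \<Longrightarrow>
    list_prod G (xs @ ys) = list_prod G xs \<otimes> list_prod G ys"
  by (induction xs) (auto simp: m_assoc)

end

definition eval_equation :: "('a, 'b) monoid_scheme \<Rightarrow> (nat \<Rightarrow> nat) \<Rightarrow> ('a \<times> nat) list \<Rightarrow> 'a"
  where "eval_equation G y P = list_prod G (map (\<lambda>(a, j). a [^]\<^bsub>G\<^esub> y j) P)"

lemma eval_equation_conv_nth:
  "eval_equation G y P = list_prod G (map (\<lambda>i. fst (P ! i) [^]\<^bsub>G\<^esub> y (snd (P ! i))) [0..<length P])"
  unfolding eval_equation_def by (rule arg_cong [where f = "list_prod G"], rule nth_equalityI)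
    (auto simp: case_prod_beta)

lemma (in monoid) eval_equation_append:
  assumes "fst ` set P \<subseteq> carrier G" and "fst ` set Q \<subseteq> carrier G"
  shows "eval_equation G y (P @ Q) = eval_equation G y P \<otimes> eval_equation G y Q"
  using assms unfolding eval_equation_def map_append
  by (intro list_prod_append) auto

lemma (in monoid) eval_equation_Nil [simp]: "eval_equation G y [] = \<one>"
  by (simp add: eval_equation_def)

lemma (in monoid) eval_equation_Cons [simp]:
  "eval_equation G y ((a, j) # P) = a [^] y j \<otimes> eval_equation G y P"
  by (simp add: eval_equation_def)

fun and_equation :: "'a \<Rightarrow> 'a \<Rightarrow> nat \<Rightarrow> ('a \<times> nat) list" where
  "and_equation g s 0 = [(g, 0)]"
| "and_equation g s (Suc n) =
    and_equation g s n @ and_equation g s n @ [(s, Suc n)] @ and_equation g s n @ [(s, Suc n)]"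

lemma length_and_equation: "length (and_equation g s n) + 1 = 2 * 3 ^ n"
  by (induction n) auto

lemma and_equation_coefficients: "fst ` set (and_equation g s n) \<subseteq> {g, s}"
  by (induction n) auto

lemma and_equation_variables: "snd ` set (and_equation g s n) \<subseteq> {..n}"
  by (induction n) auto

context group
begin

lemma eval_and_equation:
  assumes g: "g \<in> carrier G" and s: "s \<in> carrier G"
    and g_cube: "g [^] (3 :: nat) = \<one>" and s_square: "s \<otimes> s = \<one>"
    and s_inverts_g: "s \<otimes> g \<otimes> s = inv g"
    and y: "\<forall>j\<le>n. y j \<in> {0, 1}"
  shows "eval_equation G y (and_equation g s n) = (if \<forall>j\<le>n. y j = 1 then g else \<one>)"
  using y
proof (induction n)
  case 0
  then show ?case using g by auto
next
  case (Suc n)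
  define w where "w = eval_equation G y (and_equation g s n)"
  have IH: "w = (if \<forall>j\<le>n. y j = 1 then g else \<one>)"
    using Suc by (simp add: w_def)
  then have w: "w \<in> carrier G" using g by simp
  have coeffs: "fst ` set (and_equation g s n) \<subseteq> carrier G"
    using and_equation_coefficients [of g s n] g s by auto
  let ?t = "s [^] y (Suc n)"
  have "eval_equation G y (and_equation g s (Suc n)) = w \<otimes> (w \<otimes> (?t \<otimes> (w \<otimes> ?t)))"
    using coeffs s by (simp add: eval_equation_append flip: w_def)
  also have "\<dots> = (if y (Suc n) = 1 then w else \<one>)"
  proof (cases "y (Suc n) = 1")
    case True
    have "s \<otimes> w \<otimes> s = inv w"
      using IH g s s_square s_inverts_g by auto
    then show ?thesis using True w s by (simp add: m_assoc [symmetric])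
  next
    case False
    then have "y (Suc n) = 0" using Suc.prems by auto
    moreover have "w \<otimes> (w \<otimes> w) = \<one>"
      using IH g g_cube by (auto simp: numeral_3_eq_3 m_assoc)
    ultimately show ?thesis using False w by simp
  qed
  also have "\<dots> = (if \<forall>j\<le>Suc n. y j = 1 then g else \<one>)"
    using IH by (auto simp: le_Suc_eq)
  finally show ?case .
qed

end

lemma group_D3: "group D3"
proof (rule groupI)
  fix x y z assume "x \<in> carrier D3" "y \<in> carrier D3" "z \<in> carrier D3"
  then show "x \<otimes>\<^bsub>D3\<^esub> y \<otimes>\<^bsub>D3\<^esub> z = x \<otimes>\<^bsub>D3\<^esub> (y \<otimes>\<^bsub>D3\<^esub> z)"
    by (cases x; cases y; cases z) (auto simp: D3_def)
next
  fix x assume "x \<in> carrier D3"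
  then obtain k s where x: "x = (k, s)" "k \<in> {0, 1, 2}" by (auto simp: D3_def)
  show "\<exists>x'\<in>carrier D3. x' \<otimes>\<^bsub>D3\<^esub> x = \<one>\<^bsub>D3\<^esub>"
    using x by (intro bexI[of _ "if s then (k, True) else (- k mod 3, False)"]) (auto simp: D3_def)
qed (auto simp: D3_def split: prod.splits)

interpretation D3: group D3
  by (rule group_D3)

abbreviation rotation :: "int \<times> bool" where "rotation \<equiv> (1, False)"
abbreviation reflection :: "int \<times> bool" where "reflection \<equiv> (0, True)"

lemma D3_rotation_cube: "rotation [^]\<^bsub>D3\<^esub> (3 :: nat) = \<one>\<^bsub>D3\<^esub>"
  by (simp add: numeral_3_eq_3 D3_def)

lemma D3_reflection_square: "reflection \<otimes>\<^bsub>D3\<^esub> reflection = \<one>\<^bsub>D3\<^esub>"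
  by (simp add: D3_def)

lemma D3_reflection_inverts_rotation:
  "reflection \<otimes>\<^bsub>D3\<^esub> rotation \<otimes>\<^bsub>D3\<^esub> reflection = inv\<^bsub>D3\<^esub> rotation"
  by (rule D3.inv_equality [symmetric]) (auto simp: D3_def)

lemma D3_eval_and_equation:
  assumes "\<forall>j\<le>n. y j \<in> {0, 1}"
  shows "eval_equation D3 y (and_equation rotation reflection n) \<noteq> \<one>\<^bsub>D3\<^esub> \<longleftrightarrow> (\<forall>j\<le>n. y j = 1)"
  using D3.eval_and_equation [OF _ _ D3_rotation_cube D3_reflection_square
      D3_reflection_inverts_rotation assms]
  by (simp add: D3_def)

theorem mainTheorem11:
  fixes r :: nat
  assumes "r \<ge> 1"
  shows "\<exists>K :: nat. K \<le> 3 ^ r \<and>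
           (\<exists>(a :: nat \<Rightarrow> int \<times> bool) (\<pi> :: nat \<Rightarrow> nat).
              (\<forall>i<K. a i \<in> carrier D3) \<and> (\<forall>i<K. \<pi> i < r) \<and>
              (\<forall>y :: nat \<Rightarrow> nat. (\<forall>j<r. y j \<in> {0, 1}) \<longrightarrow>
                 (list_prod D3 (map (\<lambda>i. a i [^]\<^bsub>D3\<^esub> y (\<pi> i)) [0..<K]) \<noteq> \<one>\<^bsub>D3\<^esub>
                  \<longleftrightarrow> (\<forall>j<r. y j = 1))))"
proof -
  obtain n where r: "r = Suc n" using assms by (cases r) auto
  define P where "P = and_equation rotation reflection n"
  have length_bound: "length P \<le> 3 ^ r"
    using length_and_equation [of rotation reflection n] by (simp add: P_def r)
  have "fst ` set P \<subseteq> carrier D3"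
    using and_equation_coefficients [of rotation reflection n] by (auto simp: P_def D3_def)
  then have coefficients: "\<forall>i<length P. fst (P ! i) \<in> carrier D3"
    by auto
  have "snd ` set P \<subseteq> {..<r}"
    using and_equation_variables [of rotation reflection n] by (auto simp: P_def r)
  then have variables: "\<forall>i<length P. snd (P ! i) < r"
    by (auto intro: nth_mem)
  have evaluation: "list_prod D3 (map (\<lambda>i. fst (P ! i) [^]\<^bsub>D3\<^esub> y (snd (P ! i))) [0..<length P])
      \<noteq> \<one>\<^bsub>D3\<^esub> \<longleftrightarrow> (\<forall>j<r. y j = 1)" if "\<forall>j<r. y j \<in> {0, 1}" for y :: "nat \<Rightarrow> nat"
    using D3_eval_and_equation [of n y] that
    by (simp add: eval_equation_conv_nth P_def r less_Suc_eq_le)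
  show ?thesis
    using length_bound coefficients variables evaluation
    by (intro exI [of _ "length P"] conjI exI [of _ "\<lambda>i. fst (P ! i)"] exI [of _ "\<lambda>i. snd (P ! i)"])
      blast+
qed

end
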